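(* Let $r$ be a positive integer such that $r+1$ is prime, and let $k$ be a positive integer with $r+1\nmid k$ such that $(r+1)^{\alpha}k\in G_r$ for all nonnegative integers $\alpha$. If $k_1,k_2$ are relatively prime positive integers with $k_1k_2=k$, then either $(r+1)^{\alpha}k_1\in G_r$ for all nonnegative integers $\alpha$, or $(r+1)^{\alpha}k_2\in G_r$ for all nonnegative integers $\alpha$.
   Context: For a positive integer $r$, the $r$-th Schemmel totient function $S_r:\mathbb{N}\to\mathbb{N}_0$ is the multiplicative arithmetic function (so $S_r(1)=1$ and $S_r(ab)=S_r(a)S_r(b)$ for coprime $a,b$) defined on prime powers by $S_r(p^{\alpha})=0$ if $p\le r$ and $S_r(p^\alpha)=p^{\alpha-1}(p-r)$ if $p>r$, for all primes $p$ and positive integers $\alpha$. $G_r$ denotes the set of positive integers not in the range of $S_r$. *)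

theory Defs
  imports "HOL-Computational_Algebra.Primes"
begin

text \<open>Only meaningful for n > 0.\<close>
definition schemmel :: "nat \<Rightarrow> nat \<Rightarrow> nat" where
  "schemmel r n = (\<Prod>p\<in>prime_factors n.
      (if p \<le> r then 0 else p ^ (multiplicity p n - 1) * (p - r)))"

definition G :: "nat \<Rightarrow> nat set" where
  "G r = {m. m > 0 \<and> m \<notin> schemmel r ` {n. n > 0}}"

end

theory Submission
  imports Defs
begin

text \<open>If S_r(n1) = (r+1)^a1 k1 and S_r(n2) = (r+1)^a2 k2, then, exponent by exponent,
S_r(lcm n1 n2) S_r(gcd n1 n2) = S_r(n1) S_r(n2) = (r+1)^(a1+a2) k. The factor S_r(gcd n1 n2)
divides both S_r(n1) and S_r(n2), so its part prime to r+1 divides both k1 and k2 and is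
therefore 1. Hence k divides S_r(lcm n1 n2) with a cofactor dividing a power of the prime r+1,
i.e. S_r(lcm n1 n2) = (r+1)^i k, contradicting the hypothesis on k.\<close>

definition schemmel_prime_power :: "nat \<Rightarrow> nat \<Rightarrow> nat \<Rightarrow> nat" where
  "schemmel_prime_power r p e =
     (if e = 0 then 1 else if p \<le> r then 0 else p ^ (e - 1) * (p - r))"

lemma schemmel_eq_prod_superset:
  assumes "finite U" "prime_factors n \<subseteq> U" "\<forall>p\<in>U. prime p" "n > 0"
  shows "schemmel r n = (\<Prod>p\<in>U. schemmel_prime_power r p (multiplicity p n))"
proof -
  have "schemmel r n = (\<Prod>p\<in>prime_factors n. schemmel_prime_power r p (multiplicity p n))"
    unfolding schemmel_def
    by (rule prod.cong) (auto simp: schemmel_prime_power_def prime_factors_multiplicity)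
  also have "\<dots> = (\<Prod>p\<in>U. schemmel_prime_power r p (multiplicity p n))"
    by (rule prod.mono_neutral_left[OF assms(1,2)])
      (use assms(3) in \<open>auto simp: schemmel_prime_power_def prime_factors_multiplicity\<close>)
  finally show ?thesis .
qed

lemma schemmel_lcm_mult_gcd:
  assumes "m > 0" "n > 0"
  shows "schemmel r (lcm m n) * schemmel r (gcd m n) = schemmel r m * schemmel r n"
proof -
  let ?U = "prime_factors m \<union> prime_factors n"
  let ?h = "\<lambda>x p. schemmel_prime_power r p (multiplicity p x)"
  have expand: "schemmel r x = (\<Prod>p\<in>?U. ?h x p)"
    if "x > 0" "prime_factors x \<subseteq> ?U" for x
    using that by (intro schemmel_eq_prod_superset) auto
  have "prime_factors (lcm m n) \<subseteq> ?U" "prime_factors (gcd m n) \<subseteq> ?U"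
    using assms by auto
  then have "schemmel r (lcm m n) * schemmel r (gcd m n)
      = (\<Prod>p\<in>?U. ?h (lcm m n) p * ?h (gcd m n) p)"
    using assms by (simp add: expand lcm_pos_nat prod.distrib)
  also have "\<dots> = (\<Prod>p\<in>?U. ?h m p * ?h n p)"
  proof (rule prod.cong)
    fix p assume "p \<in> ?U"
    then have "prime p" by auto
    then show "?h (lcm m n) p * ?h (gcd m n) p = ?h m p * ?h n p"
      using assms by (simp add: multiplicity_lcm multiplicity_gcd max_def min_def)
  qed simp
  also have "\<dots> = schemmel r m * schemmel r n"
    using assms by (simp add: expand prod.distrib)
  finally show ?thesis .
qed

lemma schemmel_dvd_schemmel:
  assumes "d dvd m" "m > 0"
  shows "schemmel r d dvd schemmel r m"
proof -
  have "d > 0" using assms by (auto intro: Nat.gr0I)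
  then have "prime_factors d \<subseteq> prime_factors m"
    using assms by (auto simp: prime_factors_dvd intro: dvd_trans)
  then have "schemmel r d = (\<Prod>p\<in>prime_factors m. schemmel_prime_power r p (multiplicity p d))"
    using \<open>d > 0\<close> by (intro schemmel_eq_prod_superset) auto
  also have "\<dots> dvd (\<Prod>p\<in>prime_factors m. schemmel_prime_power r p (multiplicity p m))"
  proof (rule prod_dvd_prod)
    fix p assume "p \<in> prime_factors m"
    then have "multiplicity p d \<le> multiplicity p m"
      using assms by (intro dvd_imp_multiplicity_le) auto
    then show "schemmel_prime_power r p (multiplicity p d) dvd
        schemmel_prime_power r p (multiplicity p m)"
      by (auto simp: schemmel_prime_power_def intro!: mult_dvd_mono le_imp_power_dvd)
  qed
  also have "\<dots> = schemmel r m"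
    using assms by (intro schemmel_eq_prod_superset[symmetric]) auto
  finally show ?thesis .
qed

lemma coprime_common_dvd_prime_power_mult:
  fixes p y k1 k2 :: nat
  assumes "prime p" "\<not> p dvd k1 * k2" "coprime k1 k2"
    and "y dvd p ^ a1 * k1" "y dvd p ^ a2 * k2"
  shows "coprime y (k1 * k2)"
proof -
  define d where "d = gcd y (k1 * k2)"
  have "\<not> p dvd d" using assms(2) by (auto simp: d_def intro: dvd_trans)
  then have "coprime d (p ^ a)" for a
    using assms(1) prime_imp_coprime coprime_commute by (metis coprime_power_right_iff)
  moreover have "d dvd p ^ a1 * k1" "d dvd p ^ a2 * k2"
    using assms(4,5) by (auto simp: d_def intro: dvd_trans)
  ultimately have "d dvd k1" "d dvd k2"
    by (simp_all add: coprime_dvd_mult_right_iff)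
  then have "is_unit d" using assms(3) coprime_common_divisor by blast
  then show ?thesis unfolding d_def by (rule is_unit_gcd[THEN iffD1])
qed

lemma prime_power_cofactor:
  fixes p x y k :: nat
  assumes "prime p" "x * y = p ^ a * k" "coprime y k" "k > 0"
  obtains i where "x = p ^ i * k"
proof -
  have "k dvd x * y" using assms(2) by simp
  then obtain t where t: "x = k * t"
    using assms(3) by (auto simp: coprime_commute coprime_dvd_mult_left_iff)
  then have "t * y = p ^ a" using assms(2,4) by (simp add: algebra_simps)
  then have "t dvd p ^ a" by (metis dvd_triv_left)
  then obtain i where "t = p ^ i" using divides_primepow_nat[OF assms(1)] by blast
  then show ?thesis using t that by (metis mult.commute)
qed

theorem theorem2p3:
  fixes r k k1 k2 :: nat
  assumes "r > 0" and "prime (r + 1)"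
    and "k > 0" and "\<not> (r + 1) dvd k"
    and "\<forall>\<alpha>::nat. (r + 1) ^ \<alpha> * k \<in> G r"
    and "k1 > 0" and "k2 > 0" and "coprime k1 k2" and "k1 * k2 = k"
  shows "(\<forall>\<alpha>::nat. (r + 1) ^ \<alpha> * k1 \<in> G r) \<or> (\<forall>\<alpha>::nat. (r + 1) ^ \<alpha> * k2 \<in> G r)"
proof (rule ccontr)
  let ?p = "r + 1"
  assume "\<not> ?thesis"
  then obtain a1 a2 where "?p ^ a1 * k1 \<notin> G r" "?p ^ a2 * k2 \<notin> G r" by blast
  then obtain n1 n2 where n: "n1 > 0" "n2 > 0"
    and s1: "schemmel r n1 = ?p ^ a1 * k1" and s2: "schemmel r n2 = ?p ^ a2 * k2"
    using assms(6,7) unfolding G_def by auto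
  let ?g = "schemmel r (gcd n1 n2)"
  have "schemmel r (lcm n1 n2) * ?g = ?p ^ (a1 + a2) * k"
    using schemmel_lcm_mult_gcd[OF n, of r] s1 s2 assms(9) by (simp add: power_add algebra_simps)
  moreover have "coprime ?g k"
    using coprime_common_dvd_prime_power_mult[OF assms(2) _ assms(8)]
      schemmel_dvd_schemmel[of "gcd n1 n2" n1 r] schemmel_dvd_schemmel[of "gcd n1 n2" n2 r]
      n s1 s2 assms(4,9) by simp
  ultimately obtain i where "schemmel r (lcm n1 n2) = ?p ^ i * k"
    using prime_power_cofactor assms(2,3) by blast
  moreover have "lcm n1 n2 > 0" using n by (simp add: lcm_pos_nat)
  ultimately have "?p ^ i * k \<in> schemmel r ` {n. n > 0}" by force
  then show False using assms(5) unfolding G_def by blast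
qed

end
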